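(* Let $n \ge 1$ be an integer and let $A_n \in \{0,1\}^{[2]^n \times [2]^n}$ be the binary single-grain-error channel: for $x,y \in [2]^n$ (indexed $x = x_0x_1\cdots x_{n-1}$), $(A_n)_{x,y}=1$ if and only if either $y = x$, or there exists $j \in \{0,\dots,n-2\}$ such that $y_j = x_{j+1}$ and $y_i = x_i$ for all $i \ne j$. For $y \in [2]^n$ let $r_y$ be the number of runs of $y$, $u_y$ the number of runs of length one, $b^L_y \in \{0,1\}$ the indicator that the first run of $y$ has length one, and $b^R_y \in\{0,1\}$ the indicator that the last run of $y$ has length one. Then the vector $z \in \mathbb{R}^{[2]^n}$ with \[ z_y = \frac{1}{r_y}\left(1 + \frac{2u_y - 2b^R_y - b^L_y - 2}{(r_y+2)(r_y+1)}\right)^{-1} \] is feasible for $\kappa^*(A_n)$, i.e. $z \ge \mathbf{0}$ and $A_n z \ge \mathbf{1}$ entrywise.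
   Context: $[2]=\{0,1\}$; a run of a string is a maximal block of consecutive equal symbols. For $A \in \{0,1\}^{X\times Y}$, $\kappa^*(A) = \min\{\mathbf{1}^T z : z\in\mathbb{R}^Y,\ z \ge \mathbf{0},\ Az \ge \mathbf{1}\}$ (entrywise inequalities). *)

theory Defs
  imports Main "HOL.Real"
begin

text \<open>Strings over [2] = {0,1} are boolean lists; [2]^n = lists of length n.\<close>

definition strings :: "nat \<Rightarrow> bool list set" where
  "strings n = {xs. length xs = n}"

fun runs :: "'a list \<Rightarrow> 'a list list" where
  "runs [] = []"
| "runs (x # xs) =
     (case runs xs of
        [] \<Rightarrow> [[x]]
      | r # rs \<Rightarrow> (if hd r = x then (x # r) # rs else [x] # r # rs))"

definition num_runs :: "'a list \<Rightarrow> nat" where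
  "num_runs y = length (runs y)"

definition num_unit_runs :: "'a list \<Rightarrow> nat" where
  "num_unit_runs y = length (filter (\<lambda>r. length r = 1) (runs y))"

definition bL :: "'a list \<Rightarrow> nat" where
  "bL y = (if runs y \<noteq> [] \<and> length (hd (runs y)) = 1 then 1 else 0)"

definition bR :: "'a list \<Rightarrow> nat" where
  "bR y = (if runs y \<noteq> [] \<and> length (last (runs y)) = 1 then 1 else 0)"

definition sge_channel :: "nat \<Rightarrow> bool list \<Rightarrow> bool list \<Rightarrow> bool" where
  "sge_channel n x y \<longleftrightarrow>
     y = x \<or> (\<exists>j. j \<le> n - 2 \<and> j + 1 < n \<and> y ! j = x ! (j + 1) \<and>
                 (\<forall>i<n. i \<noteq> j \<longrightarrow> y ! i = x ! i))"

definition kappa_star_feasible ::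
  "'x set \<Rightarrow> 'y set \<Rightarrow> ('x \<Rightarrow> 'y \<Rightarrow> bool) \<Rightarrow> ('y \<Rightarrow> real) \<Rightarrow> bool" where
  "kappa_star_feasible X Y A z \<longleftrightarrow>
     (\<forall>y\<in>Y. z y \<ge> 0) \<and> (\<forall>x\<in>X. (\<Sum>y\<in>Y. of_bool (A x y) * z y) \<ge> 1)"

definition z_sge :: "bool list \<Rightarrow> real" where
  "z_sge y = (1 / real (num_runs y)) *
     inverse (1 + (2 * real (num_unit_runs y) - 2 * real (bR y) - real (bL y) - 2)
                  / ((real (num_runs y) + 2) * (real (num_runs y) + 1)))"

end

theory Submission
  imports Defs
begin

text \<open>
  For every boundary \<open>j\<close> of \<open>x\<close> (\<open>x\<^sub>j \<noteq> x\<^sub>j\<^sub>+\<^sub>1\<close>), overwriting \<open>x\<^sub>j\<close> by \<open>x\<^sub>j\<^sub>+\<^sub>1\<close> gives a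
  distinct column of row \<open>x\<close>, so \<open>(A z)\<^sub>x\<close> is at least \<open>z\<^sub>x\<close> plus the values of \<open>z\<close> at these shifts.
  Since \<open>1/(1 + t) \<ge> 1 - t\<close>, \<open>z\<^sub>y \<ge> 1/r - N/(r(r+1)(r+2))\<close> with \<open>r\<close> the number of runs and
  \<open>N = 2u - 2b\<^sup>R - b\<^sup>L - 2\<close>. A shift at \<open>j = 0\<close> lowers \<open>r\<close> by 1 and \<open>N\<close> by at least 1; a shift
  that deletes an inner run of length one lowers \<open>r\<close> by 2 and \<open>N\<close> by at least 2; every other shift keeps
  \<open>r\<close> and raises \<open>N\<close> by at most 2. The resulting lower bound for the row is a rational function of
  the numbers of shifts of each kind, and it is at least 1.
\<close>

definition boundary :: "'a list \<Rightarrow> nat \<Rightarrow> bool" where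
  "boundary y j \<longleftrightarrow> y ! j \<noteq> y ! Suc j"

definition isolated :: "'a list \<Rightarrow> nat \<Rightarrow> bool" where
  "isolated y p \<longleftrightarrow> (p = 0 \<or> boundary y (p - 1)) \<and> (Suc p = length y \<or> boundary y p)"

lemma boundary_Cons_Suc [simp]: "boundary (x # ys) (Suc j) = boundary ys j"
  by (simp add: boundary_def)

lemma boundary_Cons_Cons_0 [simp]: "boundary (x # y # ys) 0 \<longleftrightarrow> x \<noteq> y"
  by (simp add: boundary_def)

lemma isolated_Cons_Suc_Suc [simp]: "isolated (x # ys) (Suc (Suc p)) = isolated ys (Suc p)"
  by (simp add: isolated_def)

lemma runs_Cons_obtain: obtains r rs where "runs (y # ys) = (y # r) # rs"
proof (cases "runs ys")
  case (Cons r rs)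
  with that show ?thesis by (cases "hd r = y") auto
qed (use that in auto)

lemma runs_Cons_Cons:
  "runs (x # y # ys) =
     (if x = y then (x # hd (runs (y # ys))) # tl (runs (y # ys)) else [x] # runs (y # ys))"
proof -
  obtain r rs where "runs (y # ys) = (y # r) # rs" by (rule runs_Cons_obtain)
  then show ?thesis by (simp only: runs.simps(2)[of x "y # ys"]) auto
qed

declare runs.simps(2) [simp del]

lemma runs_Cons_ne_Nil [simp]: "runs (y # ys) \<noteq> []"
  by (metis list.distinct(1) runs_Cons_obtain)

lemma length_hd_runs_eq_1: "length (hd (runs (y # ys))) = 1 \<longleftrightarrow> ys = [] \<or> hd ys \<noteq> y"
proof (cases ys)
  case (Cons z zs)
  obtain r rs where "runs (z # zs) = (z # r) # rs" by (rule runs_Cons_obtain)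
  with Cons show ?thesis by (simp add: runs_Cons_Cons)
qed (simp add: runs.simps)

lemma num_runs_eq_boundaries:
  "y \<noteq> [] \<Longrightarrow> num_runs y = 1 + (\<Sum>j<length y - 1. of_bool (boundary y j))"
proof (induction y)
  case (Cons x ys)
  show ?case
  proof (cases ys)
    case (Cons y ys')
    have "num_runs (x # y # ys') = num_runs (y # ys') + of_bool (x \<noteq> y)"
      unfolding num_runs_def by (simp add: runs_Cons_Cons)
    moreover have "length (x # y # ys') - 1 = Suc (length (y # ys') - 1)" by simp
    ultimately show ?thesis
      using Cons.IH Cons by (simp only: sum.lessThan_Suc_shift) simp
  qed (simp add: num_runs_def runs.simps)
qed simp

lemma real_num_runs_eq_boundaries:
  "y \<noteq> [] \<Longrightarrow> real (num_runs y) = 1 + (\<Sum>j<length y - 1. of_bool (boundary y j))"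
  by (drule num_runs_eq_boundaries) (simp only: of_nat_add of_nat_sum of_nat_of_bool of_nat_1)

lemma num_runs_ge_1: "y \<noteq> [] \<Longrightarrow> 1 \<le> num_runs y"
  by (simp add: num_runs_eq_boundaries)

lemma num_unit_runs_eq_isolated:
  "num_unit_runs y = (\<Sum>p<length y. of_bool (isolated y p))"
proof (induction y)
  case (Cons x ys)
  show ?case
  proof (cases ys)
    case (Cons y ys')
    obtain r t where h: "runs (y # ys') = (y # r) # t"
      by (rule runs_Cons_obtain)
    have "length (y # r) = 1 \<longleftrightarrow> ys' = [] \<or> hd ys' \<noteq> y"
      using length_hd_runs_eq_1[of y ys'] h by simp
    then have runs_step: "num_unit_runs (x # y # ys') + of_bool (x = y \<and> (ys' = [] \<or> hd ys' \<noteq> y))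
        = num_unit_runs (y # ys') + of_bool (x \<noteq> y)"
      unfolding num_unit_runs_def runs_Cons_Cons h by auto
    have iso0: "isolated (x # y # ys') 0 \<longleftrightarrow> x \<noteq> y"
      and iso1: "isolated (x # y # ys') (Suc 0) \<longleftrightarrow> x \<noteq> y \<and> (ys' = [] \<or> y \<noteq> hd ys')"
      and iso0': "isolated (y # ys') 0 \<longleftrightarrow> ys' = [] \<or> y \<noteq> hd ys'"
      by (cases ys'; auto simp: isolated_def boundary_def)+
    show ?thesis
      using Cons.IH runs_step iso0 iso1 iso0' unfolding Cons
      by (simp only: length_Cons sum.lessThan_Suc_shift isolated_Cons_Suc_Suc) auto
  qed (simp add: num_unit_runs_def isolated_def runs.simps)
qed (simp add: num_unit_runs_def)

lemma bL_eq_isolated: "y \<noteq> [] \<Longrightarrow> bL y = of_bool (isolated y 0)"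
  by (cases y; cases "tl y")
    (auto simp: bL_def isolated_def boundary_def length_hd_runs_eq_1 simp del: One_nat_def)

lemma length_last_runs_eq_1: "length (last (runs (y # ys))) = 1 \<longleftrightarrow> isolated (y # ys) (length ys)"
proof (induction ys arbitrary: y)
  case Nil
  then show ?case by (simp add: isolated_def runs.simps)
next
  case (Cons z zs)
  obtain r t where h: "runs (z # zs) = (z # r) # t"
    by (rule runs_Cons_obtain)
  have shift: "isolated (y # z # zs) (length (z # zs)) \<longleftrightarrow> isolated (z # zs) (length zs)"
    if "zs \<noteq> [] \<or> y \<noteq> z"
    using that by (cases zs) (auto simp: isolated_def boundary_def)
  show ?case
  proof (cases "y = z \<and> t = []")
    case True
    then have single_run: "num_runs (z # zs) = 1"
      using h by (simp add: num_runs_def)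
    have "\<not> boundary (z # zs) (length zs - 1)" if "zs \<noteq> []"
      using num_runs_eq_boundaries[of "z # zs"] single_run that by (simp add: disjoint_iff)
    then have "\<not> isolated (y # z # zs) (length (z # zs))"
      using True by (cases zs) (auto simp: isolated_def boundary_def)
    moreover have "length (last (runs (y # z # zs))) \<noteq> 1"
      using True h by (simp add: runs_Cons_Cons)
    ultimately show ?thesis by blast
  next
    case False
    then have "last (runs (y # z # zs)) = last (runs (z # zs))"
      using h by (auto simp: runs_Cons_Cons)
    moreover have "zs \<noteq> [] \<or> y \<noteq> z"
      using False h by (auto simp: runs.simps)
    ultimately show ?thesis using Cons.IH shift by simp
  qed
qed

lemma bR_eq_isolated: "y \<noteq> [] \<Longrightarrow> bR y = of_bool (isolated y (length y - 1))"
  by (cases y) (auto simp: bR_def length_last_runs_eq_1 simp del: One_nat_def)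

definition unit_weight :: "'a list \<Rightarrow> nat \<Rightarrow> real" where
  "unit_weight y p =
     (if isolated y p then 2 - 2 * of_bool (Suc p = length y) - of_bool (p = 0) else 0)"

definition weight :: "'a list \<Rightarrow> real" where
  "weight y = (\<Sum>p<length y. unit_weight y p)"

lemma weight_eq_unit_runs:
  assumes "y \<noteq> []"
  shows "weight y = 2 * real (num_unit_runs y) - 2 * real (bR y) - real (bL y)"
proof -
  let ?n = "length y"
  have "weight y = (\<Sum>p<?n. 2 * of_bool (isolated y p)
      - (if p = ?n - 1 then 2 * of_bool (isolated y p) else 0)
      - (if p = 0 then of_bool (isolated y p) else 0))"
    unfolding weight_def unit_weight_def by (rule sum.cong) auto
  also have "\<dots> = 2 * (\<Sum>p<?n. of_bool (isolated y p)) - 2 * of_bool (isolated y (?n - 1))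
      - of_bool (isolated y 0)"
    using assms by (simp add: sum_subtractf sum_distrib_left)
  finally show ?thesis
    using assms by (simp add: num_unit_runs_eq_isolated bR_eq_isolated bL_eq_isolated)
qed

lemma unit_weight_nonneg: "2 \<le> length y \<Longrightarrow> 0 \<le> unit_weight y p"
  by (simp add: unit_weight_def)

lemma unit_weight_le_2: "unit_weight y p \<le> 2"
  by (simp add: unit_weight_def)

lemma weight_ge_minus_1: "y \<noteq> [] \<Longrightarrow> -1 \<le> weight y"
proof -
  assume "y \<noteq> []"
  then have "(\<Sum>p<length y. - of_bool (p = 0)) = (-1 :: real)"
    by (simp add: sum_negf)
  moreover have "(\<Sum>p<length y. - of_bool (p = 0)) \<le> weight y"
    unfolding weight_def by (rule sum_mono) (simp add: unit_weight_def)
  ultimately show ?thesis by simp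
qed

lemma z_sge_eq_weight:
  "z_sge y = 1 / real (num_runs y) *
     inverse (1 + (weight y - 2) / ((real (num_runs y) + 2) * (real (num_runs y) + 1)))"
  by (cases "y = []") (simp_all add: z_sge_def weight_eq_unit_runs num_runs_def)

text \<open>The first-order expansion of \<open>1 / r * inverse (1 + N / ((r + 2) * (r + 1)))\<close> in \<open>N\<close>.\<close>
definition z_lower :: "real \<Rightarrow> real \<Rightarrow> real" where
  "z_lower r N = 1 / r - N / (r * (r + 1) * (r + 2))"

lemma z_sge_bounds:
  assumes "y \<noteq> []"
  shows "0 \<le> z_sge y" and "z_lower (real (num_runs y)) (weight y - 2) \<le> z_sge y"
proof -
  define r where "r = real (num_runs y)"
  define t where "t = (weight y - 2) / ((r + 2) * (r + 1))"
  have r: "1 \<le> r" using num_runs_ge_1[OF assms] by (simp add: r_def)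
  have "(3 :: real) * 2 \<le> (r + 2) * (r + 1)"
    using r by (intro mult_mono) auto
  then have t: "-1/2 \<le> t"
    using weight_ge_minus_1[OF assms] unfolding t_def by (simp add: field_simps)
  have z: "z_sge y = 1 / r * inverse (1 + t)"
    by (simp add: z_sge_eq_weight r_def t_def)
  then show "0 \<le> z_sge y" using r t by simp
  have "(1 - t) * (1 + t) \<le> 1" by (simp add: algebra_simps)
  then have "1 - t \<le> inverse (1 + t)" using t by (simp add: field_simps)
  then have "1 / r * (1 - t) \<le> z_sge y"
    unfolding z using r by (intro mult_left_mono) auto
  moreover have "1 / r * (1 - t) = z_lower r (weight y - 2)"
  proof -
    have "r \<noteq> 0" "r + 1 \<noteq> 0" "r + 2 \<noteq> 0" using r by auto
    then show ?thesis unfolding t_def z_lower_def by (simp add: divide_simps)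
  qed
  ultimately show "z_lower (real (num_runs y)) (weight y - 2) \<le> z_sge y"
    by (simp add: r_def)
qed

lemma z_sge_nonneg: "0 \<le> z_sge y"
proof (cases "y = []")
  case True
  then show ?thesis by (simp add: z_sge_def num_runs_def)
qed (rule z_sge_bounds(1))

lemma z_lower_antimono: "0 < r \<Longrightarrow> N \<le> M \<Longrightarrow> z_lower r M \<le> z_lower r N"
  unfolding z_lower_def by (intro diff_left_mono divide_right_mono) auto

lemma z_sge_ge_z_lower:
  assumes "y \<noteq> []" "real (num_runs y) = r" "weight y - 2 \<le> N"
  shows "z_lower r N \<le> z_sge y"
proof -
  have "0 < r" using num_runs_ge_1[OF assms(1)] assms(2) by linarith
  then have "z_lower r N \<le> z_lower r (weight y - 2)"
    using assms(3) by (rule z_lower_antimono)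
  also have "\<dots> \<le> z_sge y"
    using z_sge_bounds(2)[OF assms(1)] assms(2) by simp
  finally show ?thesis .
qed

definition grain_shift :: "'a list \<Rightarrow> nat \<Rightarrow> 'a list" where
  "grain_shift x j = x[j := x ! Suc j]"

lemma length_grain_shift [simp]: "length (grain_shift x j) = length x"
  by (simp add: grain_shift_def)

lemma sge_channel_refl: "sge_channel n x x"
  by (simp add: sge_channel_def)

lemma sge_channel_grain_shift:
  "length x = n \<Longrightarrow> Suc j < n \<Longrightarrow> sge_channel n x (grain_shift x j)"
  unfolding sge_channel_def grain_shift_def by (intro disjI2 exI[of _ j]) auto

lemma grain_shift_neq: "Suc j < length x \<Longrightarrow> boundary x j \<Longrightarrow> grain_shift x j \<noteq> x"
  unfolding grain_shift_def boundary_def by (metis Suc_lessD nth_list_update_eq)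

lemma grain_shift_inj:
  assumes "Suc j < length x" "boundary x j" "Suc k < length x" "grain_shift x j = grain_shift x k"
  shows "j = k"
proof (rule ccontr)
  assume "j \<noteq> k"
  then have "grain_shift x k ! j = x ! j" using assms(1) by (simp add: grain_shift_def)
  moreover have "grain_shift x j ! j = x ! Suc j" using assms(1) by (simp add: grain_shift_def)
  ultimately show False using assms(2,4) by (simp add: boundary_def)
qed

text \<open>Over a binary alphabet the new symbol at \<open>j\<close> is the negation of the old one, which
  toggles the boundary at \<open>j - 1\<close>.\<close>
lemma boundary_grain_shift:
  fixes x :: "bool list"
  assumes "Suc j < length x" "boundary x j" "Suc i < length x"
  shows "boundary (grain_shift x j) i =
    (if i = j then False else if Suc i = j then \<not> boundary x i else boundary x i)"
  using assms unfolding boundary_def grain_shift_def by (auto simp: nth_list_update)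

lemma num_runs_grain_shift:
  fixes x :: "bool list"
  assumes "Suc j < length x" "boundary x j"
  shows "real (num_runs (grain_shift x j)) =
    real (num_runs x) - 1 + (if j = 0 then 0 else if boundary x (j - 1) then -1 else 1)"
proof -
  let ?m = "length x - 1"
  have ne: "x \<noteq> []" "grain_shift x j \<noteq> []"
    using assms(1) by (auto simp: grain_shift_def)
  have "real (num_runs (grain_shift x j)) = 1 + (\<Sum>i<?m. of_bool (boundary (grain_shift x j) i))"
    by (simp only: real_num_runs_eq_boundaries[OF ne(2)] length_grain_shift)
  also have "\<dots> = 1 + (\<Sum>i<?m. of_bool (boundary x i) - of_bool (i = j)
        + (if j \<noteq> 0 \<and> i = j - 1 then 1 - 2 * of_bool (boundary x i) else 0))"
    by (intro arg_cong2[where f = "(+)"] refl sum.cong) (use assms boundary_grain_shift[OF assms] in auto)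
  also have "\<dots> = 1 + (\<Sum>i<?m. of_bool (boundary x i)) - 1
      + (if j = 0 then 0 else if boundary x (j - 1) then -1 else 1)"
    using assms by (simp add: sum.distrib sum_subtractf) linarith
  also have "\<dots> = real (num_runs x) - 1 + (if j = 0 then 0 else if boundary x (j - 1) then -1 else 1)"
    by (simp only: real_num_runs_eq_boundaries[OF ne(1)])
  finally show ?thesis .
qed

lemma isolated_of_isolated_grain_shift:
  fixes x :: "bool list"
  assumes "Suc j < length x" "boundary x j" "p < length x" "p \<noteq> j" "Suc p \<noteq> j"
    and "isolated (grain_shift x j) p"
  shows "isolated x p"
  using assms(1,3-) boundary_grain_shift[OF assms(1,2), of p]
    boundary_grain_shift[OF assms(1,2), of "p - 1"] unfolding isolated_def
  by (cases "Suc p < length x"; cases p) (auto split: if_splits)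

lemma not_isolated_grain_shift:
  fixes x :: "bool list"
  assumes "Suc j < length x" "boundary x j"
  shows "\<not> isolated (grain_shift x j) j"
  using assms boundary_grain_shift[OF assms, of j] unfolding isolated_def by auto

lemma unit_weight_at_boundary:
  assumes "Suc j < length x" "boundary x j"
  shows "unit_weight x j = (if j = 0 then 1 else if boundary x (j - 1) then 2 else 0)"
  using assms by (simp add: unit_weight_def isolated_def)

lemma unit_weight_grain_shift_le:
  fixes x :: "bool list"
  assumes "Suc j < length x" "boundary x j" "p < length x"
  shows "unit_weight (grain_shift x j) p \<le> unit_weight x p - of_bool (p = j) * unit_weight x j
    + (if j \<noteq> 0 \<and> p = j - 1 \<and> \<not> boundary x (j - 1) then 2 else 0)"
proof -
  have len: "2 \<le> length x" using assms(1) by simp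
  consider "p = j" | "Suc p = j" | "p \<noteq> j" "Suc p \<noteq> j" by blast
  then show ?thesis
  proof cases
    case 1
    then show ?thesis
      using not_isolated_grain_shift[OF assms(1,2)] by (simp add: unit_weight_def)
  next
    case 2
    show ?thesis
    proof (cases "boundary x (j - 1)")
      case True
      then have "\<not> isolated (grain_shift x j) p"
        using 2 assms boundary_grain_shift[OF assms(1,2), of p] by (auto simp: isolated_def)
      then show ?thesis
        using 2 True unit_weight_nonneg[OF len] by (auto simp: unit_weight_def)
    next
      case False
      then show ?thesis
        using 2 unit_weight_le_2[of "grain_shift x j" p] unit_weight_nonneg[OF len, of p] by auto
    qed
  next
    case 3
    then have "isolated (grain_shift x j) p \<Longrightarrow> isolated x p"
      using isolated_of_isolated_grain_shift[OF assms] by blast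
    then show ?thesis
      using 3 unit_weight_nonneg[OF len, of p] by (auto simp: unit_weight_def)
  qed
qed

lemma weight_grain_shift_le:
  fixes x :: "bool list"
  assumes "Suc j < length x" "boundary x j"
  shows "weight (grain_shift x j) \<le>
    weight x - unit_weight x j + (if j \<noteq> 0 \<and> \<not> boundary x (j - 1) then 2 else 0)"
proof -
  have "weight (grain_shift x j) \<le> (\<Sum>p<length x. unit_weight x p - of_bool (p = j) * unit_weight x j
      + (if j \<noteq> 0 \<and> p = j - 1 \<and> \<not> boundary x (j - 1) then 2 else 0))"
    unfolding weight_def length_grain_shift
    by (rule sum_mono) (use unit_weight_grain_shift_le[OF assms] in simp)
  also have "\<dots> = weight x - unit_weight x j + (if j \<noteq> 0 \<and> \<not> boundary x (j - 1) then 2 else 0)"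
    using assms(1) by (simp add: weight_def sum.distrib sum_subtractf) linarith
  finally show ?thesis .
qed

lemma z_sge_grain_shift_ge:
  fixes x :: "bool list"
  assumes "Suc j < length x" "boundary x j"
  defines "r \<equiv> real (num_runs x)" and "N \<equiv> weight x - 2"
  shows "(if j = 0 then z_lower (r - 1) (N - 1)
          else if boundary x (j - 1) then z_lower (r - 2) (N - 2)
          else z_lower r (N + 2)) \<le> z_sge (grain_shift x j)"
proof -
  have "grain_shift x j \<noteq> []" using assms(1) by (auto simp: grain_shift_def)
  then show ?thesis
    using z_sge_ge_z_lower num_runs_grain_shift[OF assms(1,2)] weight_grain_shift_le[OF assms(1,2)]
      unit_weight_at_boundary[OF assms(1,2)]
    unfolding r_def N_def by (auto split: if_splits)
qed

lemma finite_strings: "finite (strings n)"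
  using finite_lists_length_eq[of "UNIV :: bool set" n] by (simp add: strings_def)

lemma row_sum_ge_grain_shifts:
  fixes x :: "bool list"
  assumes x: "x \<in> strings n"
  shows "z_sge x + (\<Sum>j<n - 1. if boundary x j then z_sge (grain_shift x j) else 0)
    \<le> (\<Sum>y\<in>strings n. of_bool (sge_channel n x y) * z_sge y)"
proof -
  have len: "length x = n" using x by (simp add: strings_def)
  define J where "J = {j \<in> {..<n - 1}. boundary x j}"
  have shift_J: "Suc j < length x" if "j \<in> J" for j using that len by (auto simp: J_def)
  have x_notin: "x \<notin> grain_shift x ` J"
    using grain_shift_neq shift_J J_def by fastforce
  have inj: "inj_on (grain_shift x) J"
    by (rule inj_onI) (use grain_shift_inj shift_J J_def in blast)
  have "(\<Sum>j<n - 1. if boundary x j then z_sge (grain_shift x j) else 0) = (\<Sum>j\<in>J. z_sge (grain_shift x j))"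
    unfolding J_def by (rule sum.inter_filter[symmetric]) simp
  also have "\<dots> = (\<Sum>y\<in>grain_shift x ` J. z_sge y)"
    using inj by (simp add: sum.reindex)
  finally have "z_sge x + (\<Sum>j<n - 1. if boundary x j then z_sge (grain_shift x j) else 0)
      = (\<Sum>y\<in>insert x (grain_shift x ` J). z_sge y)"
    using x_notin by (simp add: J_def)
  also have "\<dots> = (\<Sum>y\<in>insert x (grain_shift x ` J). of_bool (sge_channel n x y) * z_sge y)"
  proof (rule sum.cong)
    fix y assume "y \<in> insert x (grain_shift x ` J)"
    then have "sge_channel n x y"
      using shift_J sge_channel_grain_shift[OF len] len by (auto simp: sge_channel_refl)
    then show "z_sge y = of_bool (sge_channel n x y) * z_sge y" by simp
  qed simp
  also have "\<dots> \<le> (\<Sum>y\<in>strings n. of_bool (sge_channel n x y) * z_sge y)"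
    by (rule sum_mono2[OF finite_strings]) (use x len in \<open>auto simp: strings_def J_def z_sge_nonneg\<close>)
  finally show ?thesis .
qed

text \<open>In both lemmas below, the right-hand side minus 1 is rewritten over the common denominators
  \<open>R (R - 1) (R - 2) \<ge> R (R - 1) (R + 1) \<ge> R (R + 1) (R + 2)\<close> as a sum of nonnegative terms.\<close>
lemma z_lower_combination_ge_1_no_merge:
  fixes a e R N :: real
  assumes a: "0 \<le> a" and e: "0 \<le> e" and R: "R = 1 + a + e" and N: "N = e - 2"
  shows "1 \<le> z_lower R N + e * z_lower (R - 1) (N - 1) + a * z_lower R (N + 2)"
proof -
  have a_eq: "a = R - 1 - e" using R by simp
  define iY where "iY = 1 / (R * (R - 1) * (R + 1))"
  define iZ where "iZ = 1 / (R * (R + 1) * (R + 2))"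
  have iZ: "0 < iZ" unfolding iZ_def using R a e by simp
  show ?thesis
  proof (cases "e = 0")
    case True
    have "R \<noteq> 0" "R + 1 \<noteq> 0" "R + 2 \<noteq> 0" using R a e by auto
    then have "z_lower R N + a * z_lower R (N + 2) - 1 = 2 * iZ"
      unfolding iZ_def z_lower_def N a_eq True by (simp add: divide_simps) (simp add: algebra_simps)
    then show ?thesis using iZ True by simp
  next
    case False
    then have R1: "1 < R" using R a e by simp
    have "z_lower R N + e * z_lower (R - 1) (N - 1) + a * z_lower R (N + 2) - 1
        = e * (1 + a) * (iY - iZ) + 4 * e * iY + 2 * iZ"
    proof -
      have "R \<noteq> 0" "R - 1 \<noteq> 0" "R + 1 \<noteq> 0" "R + 2 \<noteq> 0" using R1 by auto
      then show ?thesis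
        unfolding iY_def iZ_def z_lower_def N a_eq by (simp add: divide_simps) (simp add: algebra_simps)
    qed
    moreover have "iZ \<le> iY" and "0 < iY"
      unfolding iY_def iZ_def using R1 by (auto intro!: divide_left_mono mult_mono mult_pos_pos)
    then have "0 \<le> e * (1 + a) * (iY - iZ) + 4 * e * iY + 2 * iZ"
      using iZ a e by (intro add_nonneg_nonneg mult_nonneg_nonneg) auto
    ultimately show ?thesis by linarith
  qed
qed

lemma z_lower_combination_ge_1:
  fixes a c e R N :: real
  assumes a: "0 \<le> a" and c: "0 \<le> c" and e: "0 \<le> e"
    and R3: "0 < c \<Longrightarrow> 3 \<le> R" and R: "R = 1 + a + c + e" and N: "N = e + 2 * c - 2"
  shows "1 \<le> z_lower R N + e * z_lower (R - 1) (N - 1) + c * z_lower (R - 2) (N - 2)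
    + a * z_lower R (N + 2)"
proof (cases "c = 0")
  case True
  then show ?thesis using z_lower_combination_ge_1_no_merge[OF a e] R N by simp
next
  case False
  with c R3 have R3: "3 \<le> R" by simp
  have a_eq: "a = R - 1 - c - e" using R by simp
  define iX where "iX = 1 / (R * (R - 1) * (R - 2))"
  define iY where "iY = 1 / (R * (R - 1) * (R + 1))"
  define iZ where "iZ = 1 / (R * (R + 1) * (R + 2))"
  have "z_lower R N + e * z_lower (R - 1) (N - 1) + c * z_lower (R - 2) (N - 2)
      + a * z_lower R (N + 2) - 1
    = c * (2 + 2 * a) * (iX - iZ) + c * e * (iX - iY) + 2 * c * iX + e * (1 + a) * (iY - iZ)
      + 4 * e * iY + 2 * iZ"
  proof -
    have "R \<noteq> 0" "R - 1 \<noteq> 0" "R - 2 \<noteq> 0" "R + 1 \<noteq> 0" "R + 2 \<noteq> 0" using R3 by auto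
    then show ?thesis
      unfolding iX_def iY_def iZ_def z_lower_def N a_eq
      by (simp add: divide_simps) (simp add: algebra_simps)
  qed
  moreover have "iZ \<le> iY" "iY \<le> iX" "0 < iZ"
    unfolding iX_def iY_def iZ_def using R3 by (auto intro!: divide_left_mono mult_mono mult_pos_pos)
  then have "0 \<le> c * (2 + 2 * a) * (iX - iZ) + c * e * (iX - iY) + 2 * c * iX
      + e * (1 + a) * (iY - iZ) + 4 * e * iY + 2 * iZ"
    using a c e by (intro add_nonneg_nonneg mult_nonneg_nonneg) auto
  ultimately show ?thesis by linarith
qed

text \<open>A shift at a boundary \<open>j \<noteq> 0\<close> deletes the run ending at \<open>j\<close> if it has length one
  (merging its neighbours), and otherwise leaves the number of runs unchanged.\<close>
definition inner_unit_runs :: "'a list \<Rightarrow> real" where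
  "inner_unit_runs x = (\<Sum>j<length x - 1. of_bool (j \<noteq> 0 \<and> boundary x j \<and> boundary x (j - 1)))"

definition long_run_ends :: "'a list \<Rightarrow> real" where
  "long_run_ends x = (\<Sum>j<length x - 1. of_bool (j \<noteq> 0 \<and> boundary x j \<and> \<not> boundary x (j - 1)))"

lemma sum_first_boundary:
  "2 \<le> length x \<Longrightarrow> (\<Sum>j<length x - 1. of_bool (j = 0 \<and> boundary x j) :: real) = of_bool (boundary x 0)"
proof -
  assume "2 \<le> length x"
  moreover have "(\<Sum>j<length x - 1. of_bool (j = 0 \<and> boundary x j) :: real)
      = (\<Sum>j<length x - 1. if j = 0 then of_bool (boundary x 0) else 0)"
    by (rule sum.cong) auto
  ultimately show ?thesis by simp
qed

lemma real_num_runs_eq_counts: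
  assumes "2 \<le> length x"
  shows "real (num_runs x) = 1 + long_run_ends x + inner_unit_runs x + of_bool (boundary x 0)"
proof -
  let ?m = "length x - 1"
  have "real (num_runs x) = 1 + (\<Sum>j<?m. of_bool (boundary x j))"
    using assms by (intro real_num_runs_eq_boundaries) auto
  also have "\<dots> = 1 + (\<Sum>j<?m. of_bool (j \<noteq> 0 \<and> boundary x j \<and> \<not> boundary x (j - 1))
      + of_bool (j \<noteq> 0 \<and> boundary x j \<and> boundary x (j - 1)) + of_bool (j = 0 \<and> boundary x j))"
    by (intro arg_cong2[where f = "(+)"] refl sum.cong) auto
  finally show ?thesis
    unfolding sum.distrib long_run_ends_def inner_unit_runs_def sum_first_boundary[OF assms]
    by linarith
qed

lemma weight_eq_counts:
  assumes "2 \<le> length x"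
  shows "weight x = of_bool (boundary x 0) + 2 * inner_unit_runs x"
proof -
  let ?m = "length x - 1"
  have "weight x = (\<Sum>p<?m. unit_weight x p) + unit_weight x ?m"
    using assms by (cases "length x") (simp_all add: weight_def)
  also have "unit_weight x ?m = 0"
    using assms by (auto simp: unit_weight_def)
  also have "(\<Sum>p<?m. unit_weight x p) = (\<Sum>p<?m. of_bool (p = 0 \<and> boundary x p)
      + 2 * of_bool (p \<noteq> 0 \<and> boundary x p \<and> boundary x (p - 1)))"
    by (rule sum.cong) (auto simp: unit_weight_def isolated_def)
  finally show ?thesis
    unfolding sum.distrib inner_unit_runs_def sum_first_boundary[OF assms] sum_distrib_left[symmetric]
    by linarith
qed

lemma num_runs_ge_3:
  fixes x :: "bool list"
  assumes "0 < inner_unit_runs x"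
  shows "3 \<le> real (num_runs x)"
proof -
  have "\<exists>j<length x - 1. j \<noteq> 0 \<and> boundary x j \<and> boundary x (j - 1)"
  proof (rule ccontr)
    assume "\<not> ?thesis"
    then have "inner_unit_runs x = 0"
      unfolding inner_unit_runs_def by (intro sum.neutral) auto
    with assms show False by simp
  qed
  then obtain j where j: "j < length x - 1" "j \<noteq> 0" "boundary x j" "boundary x (j - 1)"
    by blast
  then have "Suc j < length x" by linarith
  then have "real (num_runs (grain_shift x j)) = real (num_runs x) - 2"
    using j num_runs_grain_shift[of j x] by simp
  moreover have "1 \<le> num_runs (grain_shift x j)"
    using \<open>Suc j < length x\<close> by (intro num_runs_ge_1) (auto simp: grain_shift_def)
  ultimately show ?thesis by linarith
qed

lemma sum_z_sge_grain_shifts_ge: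
  fixes x :: "bool list"
  defines "r \<equiv> real (num_runs x)" and "N \<equiv> weight x - 2"
  assumes "2 \<le> length x"
  shows "of_bool (boundary x 0) * z_lower (r - 1) (N - 1) + inner_unit_runs x * z_lower (r - 2) (N - 2)
      + long_run_ends x * z_lower r (N + 2)
    \<le> (\<Sum>j<length x - 1. if boundary x j then z_sge (grain_shift x j) else 0)"
proof -
  let ?m = "length x - 1"
  have "of_bool (boundary x 0) * z_lower (r - 1) (N - 1) + inner_unit_runs x * z_lower (r - 2) (N - 2)
      + long_run_ends x * z_lower r (N + 2)
    = (\<Sum>j<?m. of_bool (j = 0 \<and> boundary x j) * z_lower (r - 1) (N - 1)
        + of_bool (j \<noteq> 0 \<and> boundary x j \<and> boundary x (j - 1)) * z_lower (r - 2) (N - 2)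
        + of_bool (j \<noteq> 0 \<and> boundary x j \<and> \<not> boundary x (j - 1)) * z_lower r (N + 2))"
    unfolding sum.distrib inner_unit_runs_def long_run_ends_def sum_first_boundary[OF assms(3), symmetric]
      sum_distrib_right ..
  also have "\<dots> \<le> (\<Sum>j<?m. if boundary x j then z_sge (grain_shift x j) else 0)"
  proof (rule sum_mono)
    fix j assume "j \<in> {..<?m}"
    then have "Suc j < length x" by auto
    then show "of_bool (j = 0 \<and> boundary x j) * z_lower (r - 1) (N - 1)
        + of_bool (j \<noteq> 0 \<and> boundary x j \<and> boundary x (j - 1)) * z_lower (r - 2) (N - 2)
        + of_bool (j \<noteq> 0 \<and> boundary x j \<and> \<not> boundary x (j - 1)) * z_lower r (N + 2)
      \<le> (if boundary x j then z_sge (grain_shift x j) else 0)"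
      using z_sge_grain_shift_ge[of j x] unfolding r_def N_def by (auto split: if_splits)
  qed
  finally show ?thesis .
qed

lemma z_sge_singleton: "z_sge [b] = 2"
  by (simp add: z_sge_def num_runs_def num_unit_runs_def bR_def bL_def runs.simps)

lemma row_sum_ge_1_of_length_ge_2:
  fixes x :: "bool list"
  assumes x: "x \<in> strings n" and n: "2 \<le> n"
  shows "1 \<le> (\<Sum>y\<in>strings n. of_bool (sge_channel n x y) * z_sge y)"
proof -
  have len: "length x = n" using x by (simp add: strings_def)
  with n have len2: "2 \<le> length x" by simp
  define r where "r = real (num_runs x)"
  define N where "N = weight x - 2"
  have "z_lower r N \<le> z_sge x"
    unfolding r_def N_def using len2 by (intro z_sge_bounds(2)) auto
  moreover have "1 \<le> z_lower r N + of_bool (boundary x 0) * z_lower (r - 1) (N - 1)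
      + inner_unit_runs x * z_lower (r - 2) (N - 2) + long_run_ends x * z_lower r (N + 2)"
  proof (rule z_lower_combination_ge_1)
    show "0 \<le> long_run_ends x" "0 \<le> inner_unit_runs x"
      by (simp_all add: long_run_ends_def inner_unit_runs_def sum_nonneg)
    show "r = 1 + long_run_ends x + inner_unit_runs x + of_bool (boundary x 0)"
      unfolding r_def using len2 by (rule real_num_runs_eq_counts)
    show "N = of_bool (boundary x 0) + 2 * inner_unit_runs x - 2"
      unfolding N_def using weight_eq_counts[OF len2] by simp
    show "3 \<le> r" if "0 < inner_unit_runs x"
      unfolding r_def using that by (rule num_runs_ge_3)
  qed simp_all
  moreover note sum_z_sge_grain_shifts_ge[OF len2, folded r_def N_def, unfolded len]
  ultimately show ?thesis
    using row_sum_ge_grain_shifts[OF x] by linarith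
qed

lemma row_sum_ge_1:
  fixes x :: "bool list"
  assumes x: "x \<in> strings n" and n: "1 \<le> n"
  shows "1 \<le> (\<Sum>y\<in>strings n. of_bool (sge_channel n x y) * z_sge y)"
proof (cases "n = 1")
  case True
  with x obtain b where "x = [b]" by (auto simp: strings_def length_Suc_conv)
  then show ?thesis
    using row_sum_ge_grain_shifts[OF x] True by (simp add: z_sge_singleton)
next
  case False
  with n show ?thesis by (intro row_sum_ge_1_of_length_ge_2[OF x]) simp
qed

theorem theorem3:
  fixes n :: nat
  assumes "n \<ge> 1"
  shows "kappa_star_feasible (strings n) (strings n) (sge_channel n) z_sge"
  using z_sge_nonneg row_sum_ge_1 assms unfolding kappa_star_feasible_def by blast

end
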